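(* Let $a\neq 0$ be a constant. Then there exists an analytic germ $u=u(t)$ at $t=0$ with $u(0)=a$ satisfying the differential equation $$t\,\Big(\frac{du}{dt}\Big)^2+u\,\frac{du}{dt}-\frac12=0 .$$ For any such $u$, define $$f(x,y)=\frac{x^3}{6}+y+x\,u(xy),\qquad g(x,y)=\frac{x^3}{6}+y-x\,u(xy),$$ and let $W_u$ be the planar 4-web whose foliations are the level sets of $x$, $y$, $f$, $g$. Then: (i) the cross-ratio of the four tangent lines to the foliations of $W_u$ is equal to $-1$ at every point (i.e. $\frac{\partial f}{\partial x}\frac{\partial g}{\partial y}+\frac{\partial g}{\partial x}\frac{\partial f}{\partial y}=0$); (ii) no 3-subweb of $W_u$ is hexagonal (the 3-subweb $(x,y,f)$ has nonzero Blaschke curvature at the origin); (iii) $W_u$ has the nontrivial abelian relation $\frac{x^3}{3}+2y-f-g\equiv 0$. Consequently $W_u$ is a Nakai web of rank exactly $1$. *)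

theory Defs
  imports "HOL-Analysis.Analysis"
begin

definition real_analytic_at :: "(real \<Rightarrow> real) \<Rightarrow> real \<Rightarrow> bool" where
  "real_analytic_at u t0 \<longleftrightarrow>
     (\<exists>r>0. \<exists>c::nat \<Rightarrow> real. \<forall>t. \<bar>t - t0\<bar> < r \<longrightarrow> (\<lambda>n. c n * (t - t0) ^ n) sums u t)"

definition Dx :: "(real \<times> real \<Rightarrow> real) \<Rightarrow> real \<times> real \<Rightarrow> real" where
  "Dx F p = deriv (\<lambda>s. F (s, snd p)) (fst p)"

definition Dy :: "(real \<times> real \<Rightarrow> real) \<Rightarrow> real \<times> real \<Rightarrow> real" where
  "Dy F p = deriv (\<lambda>s. F (fst p, s)) (snd p)"

definition web_f :: "(real \<Rightarrow> real) \<Rightarrow> real \<times> real \<Rightarrow> real" where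
  "web_f u p = (fst p) ^ 3 / 6 + snd p + fst p * u (fst p * snd p)"

definition web_g :: "(real \<Rightarrow> real) \<Rightarrow> real \<times> real \<Rightarrow> real" where
  "web_g u p = (fst p) ^ 3 / 6 + snd p - fst p * u (fst p * snd p)"

text \<open>With \<open>du_i = a_i dx + b_i dy\<close> and \<open>[jk] = a_j b_k - a_k b_j\<close>, the normalized
  forms \<open>\<omega>_i = [jk] du_i\<close> satisfy \<open>\<omega>_1 + \<omega>_2 + \<omega>_3 = 0\<close>; the connection form \<open>\<gamma>\<close> with
  \<open>d\<omega>_i = \<gamma> \<and> \<omega>_i\<close> is \<open>\<gamma> = d log [23] + \<alpha> du_1\<close> where \<open>\<alpha> = (\<theta> \<and> du_2)/(du_1 \<and> du_2)\<close>,
  \<open>\<theta> = d log([31]/[23])\<close>; the curvature is \<open>d\<gamma> = d\<alpha> \<and> du_1\<close>, given here by its coefficient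
  with respect to \<open>dx \<and> dy\<close>.  For the web \<open>(x, y, h)\<close> it equals
  \<open>\<partial>\<^sub>x\<partial>\<^sub>y log(h_x/h_y)\<close>.\<close>
definition bracket :: "(real \<times> real \<Rightarrow> real) \<Rightarrow> (real \<times> real \<Rightarrow> real) \<Rightarrow> real \<times> real \<Rightarrow> real" where
  "bracket v w p = Dx v p * Dy w p - Dx w p * Dy v p"

definition blaschke_alpha ::
  "(real \<times> real \<Rightarrow> real) \<Rightarrow> (real \<times> real \<Rightarrow> real) \<Rightarrow> (real \<times> real \<Rightarrow> real) \<Rightarrow> real \<times> real \<Rightarrow> real" where
  "blaschke_alpha u1 u2 u3 p =
     (let R = (\<lambda>q. bracket u3 u1 q / bracket u2 u3 q);
          \<theta>x = Dx R p / R p; \<theta>y = Dy R p / R p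
      in (\<theta>x * Dy u2 p - \<theta>y * Dx u2 p) / bracket u1 u2 p)"

definition blaschke_curvature ::
  "(real \<times> real \<Rightarrow> real) \<Rightarrow> (real \<times> real \<Rightarrow> real) \<Rightarrow> (real \<times> real \<Rightarrow> real) \<Rightarrow> real \<times> real \<Rightarrow> real" where
  "blaschke_curvature u1 u2 u3 p =
     Dx (blaschke_alpha u1 u2 u3) p * Dy u1 p - Dy (blaschke_alpha u1 u2 u3) p * Dx u1 p"

definition hexagonal_at ::
  "(real \<times> real \<Rightarrow> real) \<Rightarrow> (real \<times> real \<Rightarrow> real) \<Rightarrow> (real \<times> real \<Rightarrow> real) \<Rightarrow> real \<times> real \<Rightarrow> bool" where
  "hexagonal_at u1 u2 u3 p \<longleftrightarrow> (\<forall>\<^sub>F q in nhds p. blaschke_curvature u1 u2 u3 q = 0)"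

text \<open>Abelian relations of the 4-web with first integrals \<open>u1..u4\<close> (all vanishing at the
  base point \<open>p\<close>), normalized modulo constants by \<open>\<phi>_i(0) = 0\<close>.\<close>
definition abelian_relation ::
  "(real \<times> real \<Rightarrow> real) list \<Rightarrow> (real \<Rightarrow> real) list \<Rightarrow> real \<times> real \<Rightarrow> bool" where
  "abelian_relation us \<phi>s p \<longleftrightarrow> length \<phi>s = length us \<and>
     (\<forall>i < length us. real_analytic_at (\<phi>s ! i) ((us ! i) p) \<and> (\<phi>s ! i) ((us ! i) p) = 0) \<and>
     (\<forall>\<^sub>F q in nhds p. (\<Sum>i < length us. (\<phi>s ! i) ((us ! i) q)) = 0)"

definition trivial_relation ::
  "(real \<times> real \<Rightarrow> real) list \<Rightarrow> (real \<Rightarrow> real) list \<Rightarrow> real \<times> real \<Rightarrow> bool" where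
  "trivial_relation us \<phi>s p \<longleftrightarrow>
     (\<forall>i < length us. \<forall>\<^sub>F s in nhds ((us ! i) p). (\<phi>s ! i) s = 0)"

definition web_rank_one :: "(real \<times> real \<Rightarrow> real) list \<Rightarrow> real \<times> real \<Rightarrow> bool" where
  "web_rank_one us p \<longleftrightarrow>
     (\<exists>\<psi>s. abelian_relation us \<psi>s p \<and> \<not> trivial_relation us \<psi>s p \<and>
        (\<forall>\<phi>s. abelian_relation us \<phi>s p \<longrightarrow>
           (\<exists>c::real. \<forall>i < length us. \<forall>\<^sub>F s in nhds ((us ! i) p). (\<phi>s ! i) s = c * (\<psi>s ! i) s)))"

end

theory Submission
  imports Defs "HOL-Complex_Analysis.Complex_Analysis"
begin

text \<open>
  The substitution \<open>u = 2a s\<^sup>2/3 + a/(3s)\<close>, where \<open>s\<^sup>4 - s = 3t/(2a\<^sup>2)\<close> and \<open>s(0) = 1\<close>,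
  gives \<open>u' = 1/(2a s\<^sup>2)\<close> and turns the differential equation into an algebraic identity;
  \<open>s\<close> is the branch of the inverse of \<open>z\<^sup>4 - z\<close> through \<open>1\<close>, which is holomorphic and real on the
  real axis, so \<open>u\<close> is real-analytic.

  With \<open>t = xy\<close> one has \<open>f\<^sub>x = x\<^sup>2/2 + u + t u'\<close>, \<open>f\<^sub>y = 1 + x\<^sup>2 u'\<close> and the same with \<open>-u\<close> for \<open>g\<close>,
  so \<open>f\<^sub>x g\<^sub>y + g\<^sub>x f\<^sub>y = x\<^sup>2 (1 - 2 (t u'\<^sup>2 + u u'))\<close> vanishes by the equation. All four
  Blaschke curvatures at the origin equal \<open>1/a\<^sup>2\<close>; they only involve \<open>u(0) = a\<close>,
  \<open>u'(0) = 1/(2a)\<close> and \<open>u''(0) = -1/(2a\<^sup>3)\<close>.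

  For the rank, differentiate an abelian relation \<open>p(x) + q(y) + A(f) + B(g) = 0\<close> up to three
  times in \<open>x\<close> and restrict to the \<open>y\<close>-axis, where \<open>f = g = y\<close> and \<open>f\<^sub>x = a = -g\<^sub>x\<close>. The
  resulting identities force \<open>p'(0) = p''(0) = 0\<close> and \<open>A' = B'\<close> constant, and integrating
  shows that the relation is a multiple of \<open>x\<^sup>3/3 + 2y - f - g = 0\<close>.
\<close>

section \<open>Real-analytic germs\<close>

lemma real_analytic_at_higher_derivs:
  assumes "real_analytic_at f 0"
  obtains r where "r > 0"
    "\<And>n t. \<bar>t\<bar> < r \<Longrightarrow> ((deriv ^^ n) f has_real_derivative (deriv ^^ Suc n) f t) (at t)"
proof -
  obtain r c where r: "r > 0" and c: "\<And>t. \<bar>t\<bar> < r \<Longrightarrow> (\<lambda>n. c n * t ^ n) sums f t"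
    using assms unfolding real_analytic_at_def by auto
  define S where "S k t = (\<Sum>m. (diffs ^^ k) c m * t ^ m)" for k t
  have summable: "summable (\<lambda>m. (diffs ^^ k) c m * t ^ m)" if "\<bar>t\<bar> < r" for k t
    using that
  proof (induction k arbitrary: t)
    case 0
    then show ?case using c sums_summable by fastforce
  next
    case (Suc k)
    then show ?case using termdiff_converges[of _ r "(diffs ^^ k) c"] by auto
  qed
  have S_deriv: "(S k has_real_derivative S (Suc k) t) (at t)" if "\<bar>t\<bar> < r" for k t
    unfolding S_def using termdiffs_strong'[of r "(diffs ^^ k) c" t] summable that by auto
  have deriv_S: "(deriv ^^ k) f t = S k t" if "\<bar>t\<bar> < r" for k t
    using that
  proof (induction k arbitrary: t)
    case 0
    then show ?case using c sums_unique unfolding S_def by fastforce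
  next
    case (Suc k)
    have "((deriv ^^ k) f has_real_derivative S (Suc k) t) (at t)"
      by (rule has_field_derivative_transform_within_open[where f = "S k" and S = "{-r<..<r}"])
        (use S_deriv Suc in auto)
    then show ?case by (simp add: DERIV_imp_deriv)
  qed
  have "((deriv ^^ n) f has_real_derivative (deriv ^^ Suc n) f t) (at t)" if "\<bar>t\<bar> < r" for n t
  proof -
    have "((deriv ^^ n) f has_real_derivative S (Suc n) t) (at t)"
      by (rule has_field_derivative_transform_within_open[where f = "S n" and S = "{-r<..<r}"])
        (use S_deriv deriv_S that in auto)
    then show ?thesis using deriv_S[OF that, of "Suc n"] by simp
  qed
  with r that show ?thesis by blast
qed

lemma real_analytic_at_three_derivs:
  assumes "real_analytic_at f 0"
  obtains r where "r > 0"
    "\<And>t. \<bar>t\<bar> < r \<Longrightarrow> (f has_real_derivative deriv f t) (at t)"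
    "\<And>t. \<bar>t\<bar> < r \<Longrightarrow> (deriv f has_real_derivative deriv (deriv f) t) (at t)"
    "\<And>t. \<bar>t\<bar> < r \<Longrightarrow> (deriv (deriv f) has_real_derivative deriv (deriv (deriv f)) t) (at t)"
proof -
  obtain r where "r > 0"
    and "\<And>n t. \<bar>t\<bar> < r \<Longrightarrow> ((deriv ^^ n) f has_real_derivative (deriv ^^ Suc n) f t) (at t)"
    using real_analytic_at_higher_derivs[OF assms] by blast
  from this(2)[of _ 0] this(2)[of _ 1] this(2)[of _ 2] show ?thesis
    using that[OF \<open>r > 0\<close>] by (simp add: numeral_2_eq_2)
qed

lemma real_analytic_at_monomial: "real_analytic_at (\<lambda>s. k * s ^ m) 0"
  unfolding real_analytic_at_def
proof (intro exI[of _ 1] conjI exI[of _ "\<lambda>n. if n = m then k else 0"] allI impI)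
  fix t :: real
  have "(\<lambda>n. if n = m then k * t ^ m else 0) sums (k * t ^ m)"
    by (rule sums_single)
  then show "(\<lambda>n. (if n = m then k else 0) * (t - 0) ^ n) sums (k * t ^ m)"
    by (rule back_subst[where P = "\<lambda>h. h sums _"]) auto
qed simp

lemma real_analytic_at_Re_holomorphic:
  assumes "U holomorphic_on ball 0 \<rho>" and "\<rho> > 0"
    and "\<And>t. \<bar>t\<bar> < \<rho> \<Longrightarrow> f t = Re (U (of_real t))"
  shows "real_analytic_at f 0"
  unfolding real_analytic_at_def
proof (intro exI[of _ \<rho>] conjI exI[of _ "\<lambda>n. Re ((deriv ^^ n) U 0 / fact n)"] allI impI \<open>\<rho> > 0\<close>)
  fix t :: real
  assume "\<bar>t - 0\<bar> < \<rho>"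
  then have "(\<lambda>n. (deriv ^^ n) U 0 / fact n * (of_real t - 0) ^ n) sums U (of_real t)"
    using holomorphic_power_series[OF assms(1), of "of_real t"] by simp
  then have "(\<lambda>n. Re ((deriv ^^ n) U 0 / fact n * of_real (t ^ n))) sums Re (U (of_real t))"
    using sums_Re by fastforce
  moreover have Re_mult: "Re (z * of_real (t ^ n)) = Re z * t ^ n" for z n
    by simp
  ultimately show "(\<lambda>n. Re ((deriv ^^ n) U 0 / fact n) * (t - 0) ^ n) sums f t"
    using assms(3) \<open>\<bar>t - 0\<bar> < \<rho>\<close> by (simp only: Re_mult diff_zero)
qed

lemma has_real_derivative_Re_of_real:
  assumes "(g has_field_derivative D) (at (of_real t))"
  shows "((\<lambda>x. Re (g (of_real x))) has_real_derivative Re D) (at t)"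
  using has_field_derivative_Re[OF has_vector_derivative_real_field[OF assms]] .

section \<open>Existence of the analytic solution\<close>

lemma real_preimage_of_real_under_injective:
  assumes "inj_on h (ball (of_real c) r)" and "s \<in> ball (of_real c) r"
    and "h (cnj s) = cnj (h s)" and "h s = of_real x"
  shows "s = of_real (Re s)"
proof -
  have "dist (of_real c) (cnj s) = dist (of_real c) s"
    by (metis complex_cnj_complex_of_real complex_mod_cnj complex_cnj_diff dist_norm)
  then have "cnj s \<in> ball (of_real c) r"
    using assms(2) by simp
  moreover have "h (cnj s) = h s"
    using assms(3,4) by simp
  ultimately have "cnj s = s"
    using assms(1,2) unfolding inj_on_def by blast
  then show ?thesis
    by (simp add: complex_eq_iff)
qed

lemma quartic_local_inverse:
  obtains e :: real and g :: "complex \<Rightarrow> complex"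
  where "e > 0" "g 0 = 1"
    "\<And>w. w \<in> ball 0 e \<Longrightarrow> g w ^ 4 - g w = w \<and> g w \<noteq> 0 \<and> 4 * g w ^ 3 - 1 \<noteq> 0"
    "\<And>w. w \<in> ball 0 e \<Longrightarrow> (g has_field_derivative 1 / (4 * g w ^ 3 - 1)) (at w)"
    "\<And>t. \<bar>t\<bar> < e \<Longrightarrow> g (of_real t) = of_real (Re (g (of_real t)))"
proof -
  define h :: "complex \<Rightarrow> complex" where "h z = z ^ 4 - z" for z
  have h_deriv: "deriv h z = 4 * z ^ 3 - 1" for z
    unfolding h_def by (auto intro!: DERIV_imp_deriv derivative_eq_intros)
  have h_holo: "h holomorphic_on ball 1 (1/2)"
    unfolding h_def by (intro holomorphic_intros)
  have "(1::complex) \<in> ball 1 (1/2)" "deriv h 1 \<noteq> 0"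
    by (simp_all add: h_deriv)
  then obtain r where r: "r > 0" "ball (1::complex) r \<subseteq> ball 1 (1/2)" "open (h ` ball 1 r)"
      "inj_on h (ball 1 r)"
    using has_complex_derivative_locally_invertible[OF h_holo _ open_ball] by blast
  define B where "B = ball (1::complex) r"
  have "h holomorphic_on ball 1 r"
    unfolding h_def by (intro holomorphic_intros)
  then obtain g where g_holo: "g holomorphic_on h ` B"
    and g_deriv: "\<And>z. z \<in> B \<Longrightarrow> deriv h z * deriv g (h z) = 1"
    and g_h: "\<And>z. z \<in> B \<Longrightarrow> g (h z) = z"
    using holomorphic_has_inverse[OF _ open_ball r(4)] unfolding B_def by blast
  have "1 \<in> B" "h 1 = 0"
    using r(1) by (simp_all add: B_def h_def)
  then have "0 \<in> h ` B"
    by (metis image_eqI)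
  then obtain e where e: "e > 0" "ball 0 e \<subseteq> h ` B"
    using r(3) openE[of "h ` B" 0] unfolding B_def by metis
  have B_nonzero: "z \<noteq> 0" if "z \<in> B" for z
  proof -
    have "z \<in> ball 1 (1/2)"
      using that r(2) unfolding B_def by blast
    then show ?thesis by (auto simp: dist_norm)
  qed
  have g_in_B: "g w \<in> B \<and> h (g w) = w" if "w \<in> ball 0 e" for w
    using that e(2) g_h by auto
  have deriv_product: "(4 * g w ^ 3 - 1) * deriv g w = 1" if "w \<in> ball 0 e" for w
    using g_deriv[of "g w"] g_in_B[OF that] by (simp add: h_deriv)
  then have h'_nonzero: "4 * g w ^ 3 - 1 \<noteq> 0" if "w \<in> ball 0 e" for w
    using that by fastforce
  have "(g has_field_derivative 1 / (4 * g w ^ 3 - 1)) (at w)" if w: "w \<in> ball 0 e" for w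
  proof -
    have "deriv g w = 1 / (4 * g w ^ 3 - 1)"
      using deriv_product[OF w] h'_nonzero[OF w] by (simp add: field_simps)
    moreover have "w \<in> h ` B" using w e(2) by blast
    ultimately show ?thesis
      using holomorphic_derivI[OF g_holo] r(3) unfolding B_def by metis
  qed
  moreover have "g (of_real t) = of_real (Re (g (of_real t)))" if "\<bar>t\<bar> < e" for t
    using g_in_B[of "of_real t"] that r(4) unfolding B_def
    by (intro real_preimage_of_real_under_injective[where h = h and c = 1 and r = r and x = t])
      (auto simp: h_def simp flip: complex_cnj_power complex_cnj_diff)
  ultimately show ?thesis
    using that e(1) g_h[OF \<open>1 \<in> B\<close>] \<open>h 1 = 0\<close> g_in_B B_nonzero h'_nonzero
    unfolding h_def by auto
qed

lemma quartic_ode_identity: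
  fixes a s t :: real
  assumes "a \<noteq> 0" "s \<noteq> 0" "s ^ 4 - s = 3 / (2 * a\<^sup>2) * t"
  shows "t * (1 / (2 * a * s\<^sup>2))\<^sup>2 + (2 * a / 3 * s\<^sup>2 + a / (3 * s)) * (1 / (2 * a * s\<^sup>2)) = 1 / 2"
proof -
  have t: "t = (s ^ 4 - s) * (2 * a\<^sup>2) / 3"
    using assms(1,3) by (simp add: field_simps)
  show ?thesis
    unfolding t using assms(1,2)
    by (simp add: field_simps) (simp add: algebra_simps power2_eq_square power4_eq_xxxx)
qed

lemma quartic_ode_deriv:
  fixes a :: real
  assumes "a \<noteq> 0" "s t \<noteq> 0" "4 * s t ^ 3 - 1 \<noteq> 0"
    and "(s has_real_derivative 3 / (2 * a\<^sup>2) / (4 * s t ^ 3 - 1)) (at t)"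
  shows "((\<lambda>t. 2 * a / 3 * (s t)\<^sup>2 + a / (3 * s t)) has_real_derivative 1 / (2 * a * (s t)\<^sup>2)) (at t)"
proof -
  define D where "D = 3 / (2 * a\<^sup>2) / (4 * s t ^ 3 - 1)"
  have "((\<lambda>t. 2 * a / 3 * (s t)\<^sup>2 + a / (3 * s t)) has_real_derivative
      2 * a / 3 * (2 * s t * D) - a * (3 * D) / (3 * s t)\<^sup>2) (at t)"
    using assms(2) by (auto intro!: derivative_eq_intros assms(4)[folded D_def] simp: power2_eq_square)
  moreover have "2 * a / 3 * (2 * s t * D) - a * (3 * D) / (3 * s t)\<^sup>2
      = a * (4 * s t ^ 3 - 1) / (3 * (s t)\<^sup>2) * D"
    using assms(2) by (simp add: field_simps power2_eq_square power3_eq_cube)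
  also have "\<dots> = 1 / (2 * a * (s t)\<^sup>2)"
    unfolding D_def using assms(1-3) by (simp add: field_simps power2_eq_square)
  ultimately show ?thesis by simp
qed

lemma scaled_quartic_branch:
  fixes \<kappa> :: real
  assumes "\<kappa> > 0"
  obtains \<rho> :: real and G :: "complex \<Rightarrow> complex" and s :: "real \<Rightarrow> real"
  where "\<rho> > 0" "G holomorphic_on ball 0 \<rho>" "\<And>\<tau>. cmod \<tau> < \<rho> \<Longrightarrow> G \<tau> \<noteq> 0" "s 0 = 1"
    "\<And>t. \<bar>t\<bar> < \<rho> \<Longrightarrow> G (of_real t) = of_real (s t)"
    "\<And>t. \<bar>t\<bar> < \<rho> \<Longrightarrow> s t ^ 4 - s t = \<kappa> * t \<and> s t \<noteq> 0 \<and> 4 * s t ^ 3 - 1 \<noteq> 0"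
    "\<And>t. \<bar>t\<bar> < \<rho> \<Longrightarrow> (s has_real_derivative \<kappa> / (4 * s t ^ 3 - 1)) (at t)"
proof -
  obtain e g where e: "e > 0" and g0: "g 0 = 1"
    and g_inv: "\<And>w. w \<in> ball 0 e \<Longrightarrow> g w ^ 4 - g w = w \<and> g w \<noteq> 0 \<and> 4 * g w ^ 3 - 1 \<noteq> 0"
    and g_deriv: "\<And>w. w \<in> ball 0 e \<Longrightarrow> (g has_field_derivative 1 / (4 * g w ^ 3 - 1)) (at w)"
    and g_real: "\<And>t. \<bar>t\<bar> < e \<Longrightarrow> g (of_real t) = of_real (Re (g (of_real t)))"
    using quartic_local_inverse by blast
  define \<rho> where "\<rho> = e / \<kappa>"
  define G where "G \<tau> = g (of_real \<kappa> * \<tau>)" for \<tau>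
  define s where "s t = Re (G (of_real t))" for t
  have \<rho>: "\<rho> > 0"
    using assms e by (simp add: \<rho>_def)
  have scaled_in_ball: "of_real \<kappa> * \<tau> \<in> ball 0 e" if "cmod \<tau> < \<rho>" for \<tau>
    using that assms by (simp add: \<rho>_def norm_mult field_simps)
  have G_deriv: "(G has_field_derivative of_real \<kappa> / (4 * G \<tau> ^ 3 - 1)) (at \<tau>)" if "cmod \<tau> < \<rho>" for \<tau>
  proof -
    have "((\<lambda>\<tau>. of_real \<kappa> * \<tau>) has_field_derivative of_real \<kappa>) (at \<tau>)"
      by (auto intro!: derivative_eq_intros)
    from DERIV_chain2[OF g_deriv[OF scaled_in_ball[OF that]] this] show ?thesis
      unfolding G_def by simp
  qed
  have G_inv: "G \<tau> ^ 4 - G \<tau> = of_real \<kappa> * \<tau> \<and> G \<tau> \<noteq> 0 \<and> 4 * G \<tau> ^ 3 - 1 \<noteq> 0" if "cmod \<tau> < \<rho>" for \<tau>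
    unfolding G_def by (rule g_inv[OF scaled_in_ball[OF that]])
  have s_real: "G (of_real t) = of_real (s t)" if "\<bar>t\<bar> < \<rho>" for t
  proof -
    have "\<bar>\<kappa> * t\<bar> < e"
      using scaled_in_ball[of "of_real t"] that by (simp add: norm_mult abs_mult)
    then show ?thesis
      using g_real[of "\<kappa> * t"] unfolding G_def s_def of_real_mult by simp
  qed
  have "G holomorphic_on ball 0 \<rho>"
    unfolding holomorphic_on_open[OF open_ball] using G_deriv by (metis dist_0_norm mem_ball)
  moreover have "s 0 = 1"
    using g0 by (simp add: s_def G_def)
  moreover have "s t ^ 4 - s t = \<kappa> * t \<and> s t \<noteq> 0 \<and> 4 * s t ^ 3 - 1 \<noteq> 0" if t: "\<bar>t\<bar> < \<rho>" for t
  proof -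
    have "of_real (s t) ^ 4 - of_real (s t) = (of_real (\<kappa> * t) :: complex)"
      and "(of_real (s t) :: complex) \<noteq> 0" and "4 * of_real (s t) ^ 3 - 1 \<noteq> (0::complex)"
      using G_inv[of "of_real t"] t unfolding s_real[OF t] by auto
    then have "of_real (s t ^ 4 - s t) = (of_real (\<kappa> * t) :: complex)"
      and "s t \<noteq> 0" and "of_real (4 * s t ^ 3 - 1) \<noteq> (0::complex)"
      by simp_all
    then show ?thesis
      by (simp only: of_real_eq_iff of_real_eq_0_iff not_False_eq_True)
  qed
  moreover have "(s has_real_derivative \<kappa> / (4 * s t ^ 3 - 1)) (at t)" if t: "\<bar>t\<bar> < \<rho>" for t
  proof -
    have "(s has_real_derivative Re (of_real \<kappa> / (4 * G (of_real t) ^ 3 - 1))) (at t)"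
      unfolding s_def[abs_def] using G_deriv[of "of_real t"] t by (intro has_real_derivative_Re_of_real) auto
    also have "Re (of_real \<kappa> / (4 * G (of_real t) ^ 3 - 1)) = \<kappa> / (4 * s t ^ 3 - 1)"
      unfolding s_real[OF t] by (simp flip: of_real_power)
    finally show ?thesis .
  qed
  ultimately show ?thesis
    using that \<rho> G_inv s_real by blast
qed

lemma ode_solution_exists:
  fixes a :: real
  assumes a: "a \<noteq> 0"
  shows "\<exists>u. real_analytic_at u 0 \<and> u 0 = a \<and>
           (\<forall>\<^sub>F t in nhds 0. t * (deriv u t)\<^sup>2 + u t * deriv u t - 1 / 2 = 0)"
proof -
  define \<kappa> :: real where "\<kappa> = 3 / (2 * a\<^sup>2)"
  have "\<kappa> > 0"
    using a by (simp add: \<kappa>_def)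
  obtain \<rho> G s where \<rho>: "\<rho> > 0" and G_holo: "G holomorphic_on ball 0 \<rho>"
    and G_nonzero: "\<And>\<tau>. cmod \<tau> < \<rho> \<Longrightarrow> G \<tau> \<noteq> 0" and s0: "s 0 = 1"
    and G_real: "\<And>t. \<bar>t\<bar> < \<rho> \<Longrightarrow> G (of_real t) = of_real (s t)"
    and s_eq: "\<And>t. \<bar>t\<bar> < \<rho> \<Longrightarrow> s t ^ 4 - s t = \<kappa> * t \<and> s t \<noteq> 0 \<and> 4 * s t ^ 3 - 1 \<noteq> 0"
    and s_deriv: "\<And>t. \<bar>t\<bar> < \<rho> \<Longrightarrow> (s has_real_derivative \<kappa> / (4 * s t ^ 3 - 1)) (at t)"
    using scaled_quartic_branch[OF \<open>\<kappa> > 0\<close>] by blast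
  define u where "u t = 2 * a / 3 * (s t)\<^sup>2 + a / (3 * s t)" for t
  define U where "U \<tau> = of_real (2 * a / 3) * (G \<tau>)\<^sup>2 + of_real a / (3 * G \<tau>)" for \<tau>
  have "U holomorphic_on ball 0 \<rho>"
    unfolding U_def using G_holo G_nonzero by (intro holomorphic_intros) auto
  moreover have "u t = Re (U (of_real t))" if "\<bar>t\<bar> < \<rho>" for t
  proof -
    have "U (of_real t) = of_real (u t)"
      unfolding U_def u_def G_real[OF that] by simp
    then show ?thesis by simp
  qed
  ultimately have "real_analytic_at u 0"
    by (rule real_analytic_at_Re_holomorphic[OF _ \<rho>])
  moreover have "u 0 = a"
    using s0 by (simp add: u_def)
  moreover have "t * (deriv u t)\<^sup>2 + u t * deriv u t - 1 / 2 = 0" if t: "\<bar>t\<bar> < \<rho>" for t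
  proof -
    have "deriv u t = 1 / (2 * a * (s t)\<^sup>2)"
      unfolding u_def[abs_def] using a s_eq[OF t] s_deriv[OF t]
      by (intro DERIV_imp_deriv quartic_ode_deriv) (auto simp: \<kappa>_def)
    then show ?thesis
      using quartic_ode_identity[OF a] s_eq[OF t] unfolding \<kappa>_def u_def by simp
  qed
  then have "\<forall>\<^sub>F t in nhds 0. t * (deriv u t)\<^sup>2 + u t * deriv u t - 1 / 2 = 0"
    using \<rho> unfolding eventually_nhds_metric dist_real_def by force
  ultimately show ?thesis by blast
qed

section \<open>Calculus on the plane and the Blaschke curvature\<close>

lemma DERIV_const_imp_linear:
  fixes P :: "real \<Rightarrow> real"
  assumes "\<And>y. \<bar>y\<bar> < e \<Longrightarrow> (P has_real_derivative c) (at y)" and "P 0 = 0" and "\<bar>y\<bar> < e"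
  shows "P y = c * y"
proof -
  have "\<exists>d. \<forall>x\<in>{-e<..<e}. P x - c * x = d"
  proof (rule has_field_derivative_zero_constant)
    fix x assume "x \<in> {-e<..<e}"
    then have "((\<lambda>x. P x - c * x) has_real_derivative c - c * 1) (at x)"
      using assms(1) by (intro derivative_intros) auto
    then show "((\<lambda>x. P x - c * x) has_real_derivative 0) (at x within {-e<..<e})"
      by (simp add: has_field_derivative_at_within)
  qed simp
  then obtain d where d: "\<And>x. x \<in> {-e<..<e} \<Longrightarrow> P x - c * x = d"
    by blast
  have "e > 0"
    using assms(3) by linarith
  with d[of 0] d[of y] assms(2,3) show ?thesis
    by (auto simp: abs_less_iff)
qed

lemma eventually_nhds_zero_box:
  assumes "\<forall>\<^sub>F p in nhds (0::real, 0::real). P p"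
  obtains e where "e > 0" "\<And>x y. \<bar>x\<bar> < e \<Longrightarrow> \<bar>y\<bar> < e \<Longrightarrow> P (x, y)"
proof -
  obtain d where d: "d > 0" "\<And>p. dist p (0, 0) < d \<Longrightarrow> P p"
    using assms unfolding eventually_nhds_metric by blast
  have "P (x, y)" if "\<bar>x\<bar> < d / 2" "\<bar>y\<bar> < d / 2" for x y
  proof -
    have "dist (x, y) (0, 0) \<le> norm x + norm y"
      using norm_Pair_le[of x y] by (simp add: dist_norm)
    also have "\<dots> < d"
      using that by simp
    finally show ?thesis
      using d(2) by blast
  qed
  then show ?thesis
    using that[of "d / 2"] d(1) by simp
qed

lemma deriv_eq_eventually:
  assumes "\<forall>\<^sub>F y in nhds x. F y = K y" and "(K has_real_derivative D) (at x)"
  shows "deriv F x = D"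
  using deriv_cong_ev[OF assms(1) refl] DERIV_imp_deriv[OF assms(2)] by simp

lemma has_real_derivative_vanishing_near:
  assumes "(F has_real_derivative D) (at x)" "\<bar>x\<bar> < e" "\<And>z. \<bar>z\<bar> < e \<Longrightarrow> F z = 0"
  shows "D = 0"
proof -
  have "((\<lambda>_. 0) has_real_derivative D) (at x)"
    by (rule has_field_derivative_transform_within_open[OF assms(1), of "{-e<..<e}"])
      (use assms(2,3) in auto)
  then show ?thesis
    using DERIV_const DERIV_unique by blast
qed

lemma Dx_Pair: "Dx F (x, y) = deriv (\<lambda>\<sigma>. F (\<sigma>, y)) x"
  by (simp add: Dx_def)

lemma Dy_Pair: "Dy F (x, y) = deriv (\<lambda>\<sigma>. F (x, \<sigma>)) y"
  by (simp add: Dy_def)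

lemma Dx_fst [simp]: "Dx fst p = 1"
  and Dy_fst [simp]: "Dy fst p = 0"
  and Dx_snd [simp]: "Dx snd p = 0"
  and Dy_snd [simp]: "Dy snd p = 1"
  by (simp_all add: Dx_def Dy_def)

lemma blaschke_alpha_fst_snd:
  "blaschke_alpha fst snd h p = Dx (\<lambda>q. Dy h q / Dx h q) p / (Dy h p / Dx h p)"
proof -
  have "(\<lambda>q. bracket h fst q / bracket snd h q) = (\<lambda>q. Dy h q / Dx h q)"
    by (simp add: fun_eq_iff bracket_def)
  then show ?thesis
    unfolding blaschke_alpha_def Let_def by (simp add: bracket_def)
qed

lemma blaschke_alpha_fst:
  "blaschke_alpha fst v w p =
     (let R = (\<lambda>q. - Dy w q / bracket v w q)
      in (Dx R p / R p * Dy v p - Dy R p / R p * Dx v p) / Dy v p)"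
proof -
  have "(\<lambda>q. bracket w fst q / bracket v w q) = (\<lambda>q. - Dy w q / bracket v w q)"
    by (simp add: fun_eq_iff bracket_def)
  then show ?thesis
    unfolding blaschke_alpha_def Let_def by (simp add: bracket_def)
qed

lemma blaschke_alpha_snd:
  "blaschke_alpha snd v w p =
     (let R = (\<lambda>q. Dx w q / bracket v w q)
      in (Dx R p / R p * Dy v p - Dy R p / R p * Dx v p) / - Dx v p)"
proof -
  have "(\<lambda>q. bracket w snd q / bracket v w q) = (\<lambda>q. Dx w q / bracket v w q)"
    by (simp add: fun_eq_iff bracket_def)
  then show ?thesis
    unfolding blaschke_alpha_def Let_def by (simp add: bracket_def)
qed

lemma blaschke_curvature_fst_origin:
  assumes "\<forall>\<^sub>F s in nhds 0. blaschke_alpha fst v w (0, s) = A s"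
    and "(A has_real_derivative D) (at 0)"
  shows "blaschke_curvature fst v w (0, 0) = - D"
  using deriv_eq_eventually[OF assms]
  by (simp add: blaschke_curvature_def Dy_Pair)

lemma blaschke_curvature_snd_origin:
  assumes "\<forall>\<^sub>F s in nhds 0. blaschke_alpha snd v w (s, 0) = A s"
    and "(A has_real_derivative D) (at 0)"
  shows "blaschke_curvature snd v w (0, 0) = D"
  using deriv_eq_eventually[OF assms]
  by (simp add: blaschke_curvature_def Dx_Pair)

lemma not_hexagonal_at:
  "blaschke_curvature u1 u2 u3 p \<noteq> 0 \<Longrightarrow> \<not> hexagonal_at u1 u2 u3 p"
  unfolding hexagonal_at_def using eventually_nhds_x_imp_x by blast

section \<open>The web \<open>W\<^sub>u\<close>\<close>

lemma web_on_y_axis [simp]: "web_f u (0, y) = y" "web_g u (0, y) = y"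
  by (simp_all add: web_f_def web_g_def)

locale ode_solution_germ =
  fixes u u' u'' u''' :: "real \<Rightarrow> real" and a r :: real
  assumes a_nonzero: "a \<noteq> 0" and u_0: "u 0 = a" and r_pos: "r > 0"
    and u_deriv: "\<And>t. \<bar>t\<bar> < r \<Longrightarrow> (u has_real_derivative u' t) (at t)"
    and u'_deriv: "\<And>t. \<bar>t\<bar> < r \<Longrightarrow> (u' has_real_derivative u'' t) (at t)"
    and u''_deriv: "\<And>t. \<bar>t\<bar> < r \<Longrightarrow> (u'' has_real_derivative u''' t) (at t)"
    and ode: "\<And>t. \<bar>t\<bar> < r \<Longrightarrow> t * (u' t)\<^sup>2 + u t * u' t = 1 / 2"
begin

lemma u_chain [derivative_intros]:
  "\<bar>g x\<bar> < r \<Longrightarrow> (g has_real_derivative g') (at x within S) \<Longrightarrow>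
    ((\<lambda>s. u (g s)) has_real_derivative u' (g x) * g') (at x within S)"
  and u'_chain [derivative_intros]:
  "\<bar>g x\<bar> < r \<Longrightarrow> (g has_real_derivative g') (at x within S) \<Longrightarrow>
    ((\<lambda>s. u' (g s)) has_real_derivative u'' (g x) * g') (at x within S)"
  and u''_chain [derivative_intros]:
  "\<bar>g x\<bar> < r \<Longrightarrow> (g has_real_derivative g') (at x within S) \<Longrightarrow>
    ((\<lambda>s. u'' (g s)) has_real_derivative u''' (g x) * g') (at x within S)"
  using DERIV_chain2[OF u_deriv] DERIV_chain2[OF u'_deriv] DERIV_chain2[OF u''_deriv] by blast+

lemma u'_0: "u' 0 = 1 / (2 * a)"
  using ode[of 0] r_pos a_nonzero u_0 by (simp add: field_simps)

lemma u''_0: "u'' 0 = - 1 / (2 * a ^ 3)"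
proof -
  have "((\<lambda>t. t * (u' t)\<^sup>2 + u t * u' t - 1 / 2) has_real_derivative
      2 * (u' 0)\<^sup>2 + a * u'' 0) (at 0)"
    using r_pos u_0 by (auto intro!: derivative_eq_intros u_deriv u'_deriv simp: power2_eq_square)
  then have "2 * (u' 0)\<^sup>2 + a * u'' 0 = 0"
    by (rule has_real_derivative_vanishing_near[where e = r]) (use r_pos ode in auto)
  then show ?thesis
    unfolding u'_0 using a_nonzero by (simp add: field_simps power2_eq_square power3_eq_cube)
qed

lemma eventually_product_small: "\<forall>\<^sub>F p in nhds (0, 0). \<bar>fst p * snd p\<bar> < r"
proof -
  have "((\<lambda>p::real \<times> real. fst p * snd p) \<longlongrightarrow> 0) (nhds (0, 0))"
    using tendsto_mult[OF tendsto_fst[OF filterlim_ident] tendsto_snd[OF filterlim_ident],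
        of "(0::real, 0::real)"] by simp
  from tendstoD[OF this r_pos] show ?thesis
    by (simp add: dist_real_def)
qed

lemma eventually_mult_small: "\<forall>\<^sub>F \<sigma> in nhds 0. \<bar>\<sigma> * s\<bar> < r"
proof -
  have "((\<lambda>\<sigma>. \<sigma> * s) \<longlongrightarrow> 0 * s) (nhds 0)"
    by (intro tendsto_intros filterlim_ident)
  from tendstoD[OF this r_pos] show ?thesis
    by (simp add: dist_real_def)
qed

definition "fx x y = x\<^sup>2 / 2 + u (x * y) + x * y * u' (x * y)"
definition "fy x y = 1 + x\<^sup>2 * u' (x * y)"
definition "gx x y = x\<^sup>2 / 2 - u (x * y) - x * y * u' (x * y)"
definition "gy x y = 1 - x\<^sup>2 * u' (x * y)"

lemma web_f_has_deriv_x: "\<bar>x * y\<bar> < r \<Longrightarrow> ((\<lambda>\<sigma>. web_f u (\<sigma>, y)) has_real_derivative fx x y) (at x)"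
  and web_f_has_deriv_y: "\<bar>x * y\<bar> < r \<Longrightarrow> ((\<lambda>\<sigma>. web_f u (x, \<sigma>)) has_real_derivative fy x y) (at y)"
  and web_g_has_deriv_x: "\<bar>x * y\<bar> < r \<Longrightarrow> ((\<lambda>\<sigma>. web_g u (\<sigma>, y)) has_real_derivative gx x y) (at x)"
  and web_g_has_deriv_y: "\<bar>x * y\<bar> < r \<Longrightarrow> ((\<lambda>\<sigma>. web_g u (x, \<sigma>)) has_real_derivative gy x y) (at y)"
  unfolding web_f_def web_g_def fx_def fy_def gx_def gy_def
  by (auto intro!: derivative_eq_intros simp: power2_eq_square)

lemma Dx_web_f: "\<bar>x * y\<bar> < r \<Longrightarrow> Dx (web_f u) (x, y) = fx x y"
  and Dy_web_f: "\<bar>x * y\<bar> < r \<Longrightarrow> Dy (web_f u) (x, y) = fy x y"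
  and Dx_web_g: "\<bar>x * y\<bar> < r \<Longrightarrow> Dx (web_g u) (x, y) = gx x y"
  and Dy_web_g: "\<bar>x * y\<bar> < r \<Longrightarrow> Dy (web_g u) (x, y) = gy x y"
  by (simp_all add: Dx_Pair Dy_Pair DERIV_imp_deriv web_f_has_deriv_x web_f_has_deriv_y
      web_g_has_deriv_x web_g_has_deriv_y)

lemma partials_on_y_axis [simp]: "fx 0 s = a" "fy 0 s = 1" "gx 0 s = - a" "gy 0 s = 1"
  and partials_on_x_axis [simp]: "fx s 0 = s\<^sup>2 / 2 + a" "fy s 0 = 1 + s\<^sup>2 * u' 0"
    "gx s 0 = s\<^sup>2 / 2 - a" "gy s 0 = 1 - s\<^sup>2 * u' 0"
  by (simp_all add: fx_def fy_def gx_def gy_def u_0)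

lemma cross_ratio_harmonic:
  "\<forall>\<^sub>F p in nhds (0, 0). Dx (web_f u) p * Dy (web_g u) p + Dx (web_g u) p * Dy (web_f u) p = 0"
  using eventually_product_small
proof eventually_elim
  case (elim p)
  obtain x y where p: "p = (x, y)" by (cases p)
  with elim have xy: "\<bar>x * y\<bar> < r" by simp
  have "fx x y * gy x y + gx x y * fy x y
      = x\<^sup>2 * (1 - 2 * ((x * y) * (u' (x * y))\<^sup>2 + u (x * y) * u' (x * y)))"
    unfolding fx_def fy_def gx_def gy_def by (simp add: algebra_simps power2_eq_square)
  also have "\<dots> = 0"
    using ode[OF xy] by simp
  finally show ?case
    using xy by (simp add: p Dx_web_f Dy_web_f Dx_web_g Dy_web_g)
qed

lemma blaschke_curvature_fst_snd_web_f: "blaschke_curvature fst snd (web_f u) (0, 0) = 1 / a\<^sup>2"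
proof -
  have "blaschke_alpha fst snd (web_f u) (0, s) = - 2 * u' 0 / a * s" for s
  proof -
    have "((\<lambda>\<sigma>. fy \<sigma> s / fx \<sigma> s) has_real_derivative - 2 * s * u' 0 / a\<^sup>2) (at 0)"
      unfolding fx_def fy_def using r_pos a_nonzero u_0
      by (auto intro!: derivative_eq_intros simp: power2_eq_square)
    moreover have "\<forall>\<^sub>F \<sigma> in nhds 0. Dy (web_f u) (\<sigma>, s) / Dx (web_f u) (\<sigma>, s) = fy \<sigma> s / fx \<sigma> s"
      using eventually_mult_small[of s] by eventually_elim (simp add: Dx_web_f Dy_web_f)
    ultimately have "Dx (\<lambda>q. Dy (web_f u) q / Dx (web_f u) q) (0, s) = - 2 * s * u' 0 / a\<^sup>2"
      unfolding Dx_Pair by (intro deriv_eq_eventually)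
    then show ?thesis
      using r_pos a_nonzero
      by (simp add: blaschke_alpha_fst_snd Dx_web_f Dy_web_f power2_eq_square)
  qed
  then have "\<forall>\<^sub>F s in nhds 0. blaschke_alpha fst snd (web_f u) (0, s) = - 2 * u' 0 / a * s"
    by simp
  moreover have "((\<lambda>s. - 2 * u' 0 / a * s) has_real_derivative - 2 * u' 0 / a) (at 0)"
    by (auto intro!: derivative_eq_intros simp: a_nonzero)
  ultimately have "blaschke_curvature fst snd (web_f u) (0, 0) = - (- 2 * u' 0 / a)"
    by (rule blaschke_curvature_fst_origin)
  then show ?thesis
    using a_nonzero by (simp add: u'_0 power2_eq_square)
qed

end

lemma web_g_eq_web_f_uminus: "web_g u = web_f (\<lambda>t. - u t)"
  by (simp add: fun_eq_iff web_f_def web_g_def)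

lemma (in ode_solution_germ) ode_solution_germ_uminus:
  "ode_solution_germ (\<lambda>t. - u t) (\<lambda>t. - u' t) (\<lambda>t. - u'' t) (\<lambda>t. - u''' t) (- a) r"
  by unfold_locales
    (use a_nonzero u_0 r_pos ode in \<open>auto intro!: derivative_eq_intros u_deriv u'_deriv u''_deriv\<close>)

lemma (in ode_solution_germ) blaschke_curvature_fst_snd_web_g:
  "blaschke_curvature fst snd (web_g u) (0, 0) = 1 / a\<^sup>2"
  using ode_solution_germ.blaschke_curvature_fst_snd_web_f[OF ode_solution_germ_uminus]
  by (simp add: web_g_eq_web_f_uminus)

context ode_solution_germ
begin

lemma partials_has_deriv_x_at_y_axis:
  "((\<lambda>\<sigma>. fx \<sigma> s) has_real_derivative 2 * s * u' 0) (at 0)"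
  "((\<lambda>\<sigma>. fy \<sigma> s) has_real_derivative 0) (at 0)"
  "((\<lambda>\<sigma>. gx \<sigma> s) has_real_derivative - 2 * s * u' 0) (at 0)"
  "((\<lambda>\<sigma>. gy \<sigma> s) has_real_derivative 0) (at 0)"
  unfolding fx_def fy_def gx_def gy_def using r_pos by (auto intro!: derivative_eq_intros)

lemma partials_has_deriv_y_at_x_axis:
  "((\<lambda>\<sigma>. fx s \<sigma>) has_real_derivative 2 * s * u' 0) (at 0)"
  "((\<lambda>\<sigma>. fy s \<sigma>) has_real_derivative s ^ 3 * u'' 0) (at 0)"
  "((\<lambda>\<sigma>. gx s \<sigma>) has_real_derivative - 2 * s * u' 0) (at 0)"
  "((\<lambda>\<sigma>. gy s \<sigma>) has_real_derivative - (s ^ 3 * u'' 0)) (at 0)"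
  unfolding fx_def fy_def gx_def gy_def using r_pos
  by (auto intro!: derivative_eq_intros simp: power3_eq_cube power2_eq_square)

lemma blaschke_curvature_fst_web_f_web_g:
  "blaschke_curvature fst (web_f u) (web_g u) (0, 0) = 1 / a\<^sup>2"
proof -
  define R where "R q = - Dy (web_g u) q / bracket (web_f u) (web_g u) q" for q
  have R_on_y_axis: "R (0, y) = - 1 / (2 * a)" for y
    using r_pos by (simp add: R_def bracket_def Dx_web_f Dy_web_f Dx_web_g Dy_web_g)
  have "blaschke_alpha fst (web_f u) (web_g u) (0, s) = - 2 * u' 0 / a * s" for s
  proof -
    have "((\<lambda>\<sigma>. - gy \<sigma> s / (fx \<sigma> s * gy \<sigma> s - gx \<sigma> s * fy \<sigma> s)) has_real_derivative
        s * u' 0 / a\<^sup>2) (at 0)"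
      using a_nonzero
      by (auto intro!: derivative_eq_intros partials_has_deriv_x_at_y_axis
          simp: power2_eq_square field_simps)
    moreover have "\<forall>\<^sub>F \<sigma> in nhds 0.
        R (\<sigma>, s) = - gy \<sigma> s / (fx \<sigma> s * gy \<sigma> s - gx \<sigma> s * fy \<sigma> s)"
      using eventually_mult_small[of s]
      by eventually_elim (simp add: R_def bracket_def Dx_web_f Dy_web_f Dx_web_g Dy_web_g)
    ultimately have "Dx R (0, s) = s * u' 0 / a\<^sup>2"
      unfolding Dx_Pair by (intro deriv_eq_eventually)
    moreover have "Dy R (0, s) = 0"
      unfolding Dy_Pair R_on_y_axis by simp
    ultimately show ?thesis
      unfolding blaschke_alpha_fst Let_def R_def[symmetric] using r_pos a_nonzero
      by (simp add: R_on_y_axis Dx_web_f Dy_web_f power2_eq_square)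
  qed
  then have "\<forall>\<^sub>F s in nhds 0. blaschke_alpha fst (web_f u) (web_g u) (0, s) = - 2 * u' 0 / a * s"
    by simp
  moreover have "((\<lambda>s. - 2 * u' 0 / a * s) has_real_derivative - 2 * u' 0 / a) (at 0)"
    by (auto intro!: derivative_eq_intros simp: a_nonzero)
  ultimately have "blaschke_curvature fst (web_f u) (web_g u) (0, 0) = - (- 2 * u' 0 / a)"
    by (rule blaschke_curvature_fst_origin)
  then show ?thesis
    using a_nonzero by (simp add: u'_0 power2_eq_square)
qed

end

lemma quartic_less_bound:
  fixes s a :: real
  assumes "\<bar>s\<bar> < 1" "\<bar>s\<bar> < \<bar>a\<bar>"
  shows "s ^ 4 < 4 * a\<^sup>2"
proof -
  have "s\<^sup>2 < 1"
    using assms(1) by (simp add: abs_square_less_1)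
  have "\<bar>s\<bar>\<^sup>2 < \<bar>a\<bar>\<^sup>2"
    using assms(2) by (intro power_strict_mono) auto
  then have "s\<^sup>2 < a\<^sup>2" by simp
  have "s ^ 4 = s\<^sup>2 * s\<^sup>2" by (simp add: power2_eq_square power4_eq_xxxx)
  also have "\<dots> \<le> s\<^sup>2 * 1" using \<open>s\<^sup>2 < 1\<close> by (intro mult_left_mono) auto
  also have "\<dots> < 4 * a\<^sup>2" using \<open>s\<^sup>2 < a\<^sup>2\<close> zero_le_power2[of a] by linarith
  finally show ?thesis .
qed

context ode_solution_germ
begin

text \<open>Restrictions to the \<open>x\<close>-axis of \<open>[f g]\<close>, of \<open>R = g\<^sub>x / [f g]\<close>, of their partial derivatives
  and of the form \<open>\<alpha>\<close> of the web \<open>(y, f, g)\<close>, written in the shape produced by the derivative rules.\<close>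

definition "bracket_x_axis s = (s\<^sup>2 / 2 + a) * (1 - s\<^sup>2 * u' 0) - (s\<^sup>2 / 2 - a) * (1 + s\<^sup>2 * u' 0)"
definition "bracket_x_axis_dx s = (s * (1 - s\<^sup>2 * u' 0) + (s\<^sup>2 / 2 + a) * - (2 * s * u' 0))
    - (s * (1 + s\<^sup>2 * u' 0) + (s\<^sup>2 / 2 - a) * (2 * s * u' 0))"
definition "bracket_x_axis_dy s = (2 * s * u' 0 * (1 - s\<^sup>2 * u' 0) + (s\<^sup>2 / 2 + a) * - (s ^ 3 * u'' 0))
    - (- (2 * s * u' 0) * (1 + s\<^sup>2 * u' 0) + (s\<^sup>2 / 2 - a) * (s ^ 3 * u'' 0))"
definition "ratio_x_axis s = (s\<^sup>2 / 2 - a) / bracket_x_axis s"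
definition "ratio_x_axis_dx s = (s * bracket_x_axis s - (s\<^sup>2 / 2 - a) * bracket_x_axis_dx s)
    / (bracket_x_axis s * bracket_x_axis s)"
definition "ratio_x_axis_dy s = (- (2 * s * u' 0) * bracket_x_axis s - (s\<^sup>2 / 2 - a) * bracket_x_axis_dy s)
    / (bracket_x_axis s * bracket_x_axis s)"
definition "alpha_x_axis s = (ratio_x_axis_dx s / ratio_x_axis s * (1 + s\<^sup>2 * u' 0)
    - ratio_x_axis_dy s / ratio_x_axis s * (s\<^sup>2 / 2 + a)) / - (s\<^sup>2 / 2 + a)"

lemma bracket_x_axis_nonzero:
  assumes "\<bar>s\<bar> < min 1 \<bar>a\<bar>"
  shows "bracket_x_axis s \<noteq> 0"
proof
  assume "bracket_x_axis s = 0"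
  then have "s ^ 4 = 4 * a\<^sup>2"
    using a_nonzero unfolding bracket_x_axis_def u'_0
    by (simp add: field_simps power2_eq_square power4_eq_xxxx)
  with quartic_less_bound[of s a] assms show False
    by simp
qed

lemma ratio_x_axis_has_deriv:
  "\<bar>s\<bar> < min 1 \<bar>a\<bar> \<Longrightarrow> (ratio_x_axis has_real_derivative ratio_x_axis_dx s) (at s)"
  using bracket_x_axis_nonzero[of s]
  unfolding ratio_x_axis_def[abs_def] ratio_x_axis_dx_def bracket_x_axis_dx_def bracket_x_axis_def
  by (auto intro!: derivative_eq_intros simp: power2_eq_square)

lemma blaschke_alpha_snd_on_x_axis:
  assumes s: "\<bar>s\<bar> < min 1 \<bar>a\<bar>"
  shows "blaschke_alpha snd (web_f u) (web_g u) (s, 0) = alpha_x_axis s"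
proof -
  define R where "R q = Dx (web_g u) q / bracket (web_f u) (web_g u) q" for q
  have "((\<lambda>\<sigma>. gx s \<sigma> / (fx s \<sigma> * gy s \<sigma> - gx s \<sigma> * fy s \<sigma>)) has_real_derivative ratio_x_axis_dy s) (at 0)"
    using bracket_x_axis_nonzero[OF s]
    unfolding ratio_x_axis_dy_def bracket_x_axis_dy_def bracket_x_axis_def
    by (auto intro!: derivative_eq_intros partials_has_deriv_y_at_x_axis)
  moreover have "\<forall>\<^sub>F \<sigma> in nhds 0. R (s, \<sigma>) = gx s \<sigma> / (fx s \<sigma> * gy s \<sigma> - gx s \<sigma> * fy s \<sigma>)"
    using eventually_mult_small[of s] by eventually_elim
      (simp add: R_def bracket_def Dx_web_f Dy_web_f Dx_web_g Dy_web_g mult.commute)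
  ultimately have "Dy R (s, 0) = ratio_x_axis_dy s"
    unfolding Dy_Pair by (intro deriv_eq_eventually)
  moreover have R_on_x_axis: "R (\<sigma>, 0) = ratio_x_axis \<sigma>" for \<sigma>
    using r_pos
    by (simp add: R_def ratio_x_axis_def bracket_x_axis_def bracket_def Dx_web_f Dy_web_f Dx_web_g Dy_web_g)
  then have "Dx R (s, 0) = ratio_x_axis_dx s"
    unfolding Dx_Pair R_on_x_axis using ratio_x_axis_has_deriv[OF s] by (simp add: DERIV_imp_deriv)
  ultimately show ?thesis
    unfolding blaschke_alpha_snd Let_def R_def[symmetric] using r_pos
    by (simp add: R_on_x_axis alpha_x_axis_def Dx_web_f Dy_web_f)
qed

lemma alpha_x_axis_has_deriv_0: "(alpha_x_axis has_real_derivative 1 / a\<^sup>2) (at 0)"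
proof -
  have "(ratio_x_axis_dx has_real_derivative 1 / (2 * a)) (at 0)"
    unfolding ratio_x_axis_dx_def[abs_def] bracket_x_axis_dx_def bracket_x_axis_def using a_nonzero
    by (auto intro!: derivative_eq_intros simp: u'_0 power2_eq_square)
  moreover have "(ratio_x_axis_dy has_real_derivative 0) (at 0)"
    unfolding ratio_x_axis_dy_def[abs_def] bracket_x_axis_dy_def bracket_x_axis_def using a_nonzero
    by (auto intro!: derivative_eq_intros simp: u'_0 power2_eq_square)
  moreover have "(ratio_x_axis has_real_derivative 0) (at 0)"
    using ratio_x_axis_has_deriv[of 0] a_nonzero by (simp add: ratio_x_axis_dx_def bracket_x_axis_dx_def)
  moreover have "ratio_x_axis 0 = - 1 / 2" "ratio_x_axis_dx 0 = 0" "ratio_x_axis_dy 0 = 0"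
    using a_nonzero
    by (simp_all add: ratio_x_axis_def ratio_x_axis_dx_def ratio_x_axis_dy_def bracket_x_axis_def
        bracket_x_axis_dx_def bracket_x_axis_dy_def)
  ultimately show ?thesis
    unfolding alpha_x_axis_def[abs_def] using a_nonzero
    by (auto intro!: derivative_eq_intros simp: power2_eq_square)
qed

lemma blaschke_curvature_snd_web_f_web_g:
  "blaschke_curvature snd (web_f u) (web_g u) (0, 0) = 1 / a\<^sup>2"
proof (rule blaschke_curvature_snd_origin[OF _ alpha_x_axis_has_deriv_0])
  have "min 1 \<bar>a\<bar> > 0"
    using a_nonzero by simp
  moreover have "blaschke_alpha snd (web_f u) (web_g u) (s, 0) = alpha_x_axis s"
    if "dist s 0 < min 1 \<bar>a\<bar>" for s
    using that by (intro blaschke_alpha_snd_on_x_axis) (simp add: dist_real_def)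
  ultimately show "\<forall>\<^sub>F s in nhds 0. blaschke_alpha snd (web_f u) (web_g u) (s, 0) = alpha_x_axis s"
    unfolding eventually_nhds_metric by blast
qed

end

lemma ode_solution_germ_of_solution:
  fixes a :: real
  assumes "a \<noteq> 0" "real_analytic_at u 0" "u 0 = a"
    and "\<forall>\<^sub>F t in nhds 0. t * (deriv u t)\<^sup>2 + u t * deriv u t - 1 / 2 = 0"
  obtains r where "ode_solution_germ u (deriv u) (deriv (deriv u)) (deriv (deriv (deriv u))) a r"
proof -
  obtain r0 where "r0 > 0"
    and derivs: "\<And>t. \<bar>t\<bar> < r0 \<Longrightarrow> (u has_real_derivative deriv u t) (at t)"
      "\<And>t. \<bar>t\<bar> < r0 \<Longrightarrow> (deriv u has_real_derivative deriv (deriv u) t) (at t)"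
      "\<And>t. \<bar>t\<bar> < r0 \<Longrightarrow> (deriv (deriv u) has_real_derivative deriv (deriv (deriv u)) t) (at t)"
    using real_analytic_at_three_derivs[OF assms(2)] by blast
  obtain r1 where "r1 > 0" and ode: "\<And>t. dist t 0 < r1 \<Longrightarrow> t * (deriv u t)\<^sup>2 + u t * deriv u t - 1 / 2 = 0"
    using assms(4) unfolding eventually_nhds_metric by blast
  have "ode_solution_germ u (deriv u) (deriv (deriv u)) (deriv (deriv (deriv u))) a (min r0 r1)"
    by unfold_locales (use assms(1,3) \<open>r0 > 0\<close> \<open>r1 > 0\<close> derivs ode in \<open>auto simp: dist_real_def\<close>)
  then show ?thesis ..
qed

section \<open>Abelian relations\<close>

context ode_solution_germ
begin

definition "fxx x y = x + 2 * y * u' (x * y) + x * y\<^sup>2 * u'' (x * y)"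
definition "fxxx x y = 1 + 3 * y\<^sup>2 * u'' (x * y) + x * y ^ 3 * u''' (x * y)"
definition "gxx x y = x - 2 * y * u' (x * y) - x * y\<^sup>2 * u'' (x * y)"
definition "gxxx x y = 1 - 3 * y\<^sup>2 * u'' (x * y) - x * y ^ 3 * u''' (x * y)"

lemma fx_has_deriv_x: "\<bar>x * y\<bar> < r \<Longrightarrow> ((\<lambda>\<sigma>. fx \<sigma> y) has_real_derivative fxx x y) (at x)"
  and gx_has_deriv_x: "\<bar>x * y\<bar> < r \<Longrightarrow> ((\<lambda>\<sigma>. gx \<sigma> y) has_real_derivative gxx x y) (at x)"
  and fxx_has_deriv_x: "\<bar>x * y\<bar> < r \<Longrightarrow> ((\<lambda>\<sigma>. fxx \<sigma> y) has_real_derivative fxxx x y) (at x)"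
  and gxx_has_deriv_x: "\<bar>x * y\<bar> < r \<Longrightarrow> ((\<lambda>\<sigma>. gxx \<sigma> y) has_real_derivative gxxx x y) (at x)"
  unfolding fx_def gx_def fxx_def gxx_def fxxx_def gxxx_def
  by (auto intro!: derivative_eq_intros simp: power2_eq_square power3_eq_cube)

lemma higher_partials_on_y_axis [simp]:
  "fxx 0 y = 2 * y * u' 0" "gxx 0 y = - 2 * y * u' 0"
  "fxxx 0 y = 1 + 3 * y\<^sup>2 * u'' 0" "gxxx 0 y = 1 - 3 * y\<^sup>2 * u'' 0"
  by (simp_all add: fxx_def gxx_def fxxx_def gxxx_def)

end

locale web_relation = ode_solution_germ +
  fixes p p' p'' p''' q A A' A'' A''' B B' B'' B''' :: "real \<Rightarrow> real" and \<rho> \<epsilon> :: real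
  assumes \<rho>_pos: "\<rho> > 0" and \<epsilon>_pos: "\<epsilon> > 0"
    and p_deriv: "\<And>t. \<bar>t\<bar> < \<rho> \<Longrightarrow> (p has_real_derivative p' t) (at t)"
    and p'_deriv: "\<And>t. \<bar>t\<bar> < \<rho> \<Longrightarrow> (p' has_real_derivative p'' t) (at t)"
    and p''_deriv: "\<And>t. \<bar>t\<bar> < \<rho> \<Longrightarrow> (p'' has_real_derivative p''' t) (at t)"
    and A_deriv: "\<And>t. \<bar>t\<bar> < \<rho> \<Longrightarrow> (A has_real_derivative A' t) (at t)"
    and A'_deriv: "\<And>t. \<bar>t\<bar> < \<rho> \<Longrightarrow> (A' has_real_derivative A'' t) (at t)"
    and A''_deriv: "\<And>t. \<bar>t\<bar> < \<rho> \<Longrightarrow> (A'' has_real_derivative A''' t) (at t)"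
    and B_deriv: "\<And>t. \<bar>t\<bar> < \<rho> \<Longrightarrow> (B has_real_derivative B' t) (at t)"
    and B'_deriv: "\<And>t. \<bar>t\<bar> < \<rho> \<Longrightarrow> (B' has_real_derivative B'' t) (at t)"
    and B''_deriv: "\<And>t. \<bar>t\<bar> < \<rho> \<Longrightarrow> (B'' has_real_derivative B''' t) (at t)"
    and vanish_at_0: "p 0 = 0" "q 0 = 0" "A 0 = 0" "B 0 = 0"
    and box: "\<And>x y. \<bar>x\<bar> < \<epsilon> \<Longrightarrow> \<bar>y\<bar> < \<epsilon> \<Longrightarrow>
        \<bar>web_f u (x, y)\<bar> < \<rho> \<and> \<bar>web_g u (x, y)\<bar> < \<rho> \<and> \<bar>x\<bar> < \<rho> \<and> \<bar>x * y\<bar> < r"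
    and relation: "\<And>x y. \<bar>x\<bar> < \<epsilon> \<Longrightarrow> \<bar>y\<bar> < \<epsilon> \<Longrightarrow>
        p x + q y + A (web_f u (x, y)) + B (web_g u (x, y)) = 0"
begin

lemma chain_within_\<rho>:
  assumes "\<And>t. \<bar>t\<bar> < \<rho> \<Longrightarrow> (P has_real_derivative P' t) (at t)"
  shows "\<bar>h x\<bar> < \<rho> \<Longrightarrow> (h has_real_derivative h') (at x) \<Longrightarrow>
    ((\<lambda>s. P (h s)) has_real_derivative P' (h x) * h') (at x)"
  using DERIV_chain2[OF assms] by blast

lemmas component_chains = chain_within_\<rho>[OF p_deriv] chain_within_\<rho>[OF p'_deriv]
  chain_within_\<rho>[OF p''_deriv] chain_within_\<rho>[OF A_deriv] chain_within_\<rho>[OF A'_deriv]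
  chain_within_\<rho>[OF A''_deriv] chain_within_\<rho>[OF B_deriv] chain_within_\<rho>[OF B'_deriv]
  chain_within_\<rho>[OF B''_deriv]

lemma \<rho>_bound_on_y_axis: "\<bar>y\<bar> < \<epsilon> \<Longrightarrow> \<bar>y\<bar> < \<rho>"
  using box[of 0 y] \<epsilon>_pos by simp

lemma relation_deriv_x:
  assumes "\<bar>x\<bar> < \<epsilon>" "\<bar>y\<bar> < \<epsilon>"
  shows "p' x + A' (web_f u (x, y)) * fx x y + B' (web_g u (x, y)) * gx x y = 0"
proof -
  have "((\<lambda>\<sigma>. p \<sigma> + q y + A (web_f u (\<sigma>, y)) + B (web_g u (\<sigma>, y))) has_real_derivative
      p' x + A' (web_f u (x, y)) * fx x y + B' (web_g u (x, y)) * gx x y) (at x)"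
    using box[OF assms]
    by (auto intro!: derivative_eq_intros component_chains web_f_has_deriv_x web_g_has_deriv_x)
  then show ?thesis
    by (rule has_real_derivative_vanishing_near[where e = \<epsilon>]) (use assms relation in auto)
qed

lemma relation_deriv_xx:
  assumes "\<bar>x\<bar> < \<epsilon>" "\<bar>y\<bar> < \<epsilon>"
  shows "p'' x + (A'' (web_f u (x, y)) * fx x y * fx x y + A' (web_f u (x, y)) * fxx x y)
    + (B'' (web_g u (x, y)) * gx x y * gx x y + B' (web_g u (x, y)) * gxx x y) = 0"
proof -
  have "((\<lambda>\<sigma>. p' \<sigma> + A' (web_f u (\<sigma>, y)) * fx \<sigma> y + B' (web_g u (\<sigma>, y)) * gx \<sigma> y)
      has_real_derivative
        p'' x + (A'' (web_f u (x, y)) * fx x y * fx x y + A' (web_f u (x, y)) * fxx x y)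
      + (B'' (web_g u (x, y)) * gx x y * gx x y + B' (web_g u (x, y)) * gxx x y)) (at x)"
    using box[OF assms]
    by (auto intro!: derivative_eq_intros component_chains web_f_has_deriv_x web_g_has_deriv_x
        fx_has_deriv_x gx_has_deriv_x)
  then show ?thesis
    by (rule has_real_derivative_vanishing_near[where e = \<epsilon>]) (use assms relation_deriv_x in auto)
qed

lemma relation_deriv_xxx_on_y_axis:
  assumes "\<bar>y\<bar> < \<epsilon>"
  shows "p''' 0 + (A''' y * a ^ 3 + 3 * A'' y * a * (2 * y * u' 0) + A' y * (1 + 3 * y\<^sup>2 * u'' 0))
    + (- B''' y * a ^ 3 + 3 * B'' y * a * (2 * y * u' 0) + B' y * (1 - 3 * y\<^sup>2 * u'' 0)) = 0"
proof -
  have "((\<lambda>\<sigma>. p'' \<sigma> + (A'' (web_f u (\<sigma>, y)) * fx \<sigma> y * fx \<sigma> y + A' (web_f u (\<sigma>, y)) * fxx \<sigma> y)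
      + (B'' (web_g u (\<sigma>, y)) * gx \<sigma> y * gx \<sigma> y + B' (web_g u (\<sigma>, y)) * gxx \<sigma> y))
      has_real_derivative
        p''' x + (A''' (web_f u (x, y)) * fx x y * fx x y * fx x y
          + 3 * A'' (web_f u (x, y)) * fx x y * fxx x y + A' (web_f u (x, y)) * fxxx x y)
      + (B''' (web_g u (x, y)) * gx x y * gx x y * gx x y
          + 3 * B'' (web_g u (x, y)) * gx x y * gxx x y + B' (web_g u (x, y)) * gxxx x y)) (at x)"
    if "\<bar>x\<bar> < \<epsilon>" for x
    using box[OF that assms]
    by (auto intro!: derivative_eq_intros component_chains web_f_has_deriv_x web_g_has_deriv_x
        fx_has_deriv_x gx_has_deriv_x fxx_has_deriv_x gxx_has_deriv_x simp: algebra_simps)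
  from this[of 0] have "p''' 0 + (A''' (web_f u (0, y)) * fx 0 y * fx 0 y * fx 0 y
          + 3 * A'' (web_f u (0, y)) * fx 0 y * fxx 0 y + A' (web_f u (0, y)) * fxxx 0 y)
      + (B''' (web_g u (0, y)) * gx 0 y * gx 0 y * gx 0 y
          + 3 * B'' (web_g u (0, y)) * gx 0 y * gxx 0 y + B' (web_g u (0, y)) * gxxx 0 y) = 0"
    by (rule has_real_derivative_vanishing_near[where e = \<epsilon>]) (use \<epsilon>_pos assms relation_deriv_xx in auto)
  then show ?thesis
    by (simp add: power3_eq_cube)
qed

lemma first_derivative_difference_on_y_axis:
  "\<bar>y\<bar> < \<epsilon> \<Longrightarrow> A' y - B' y = - p' 0 / a"
  using relation_deriv_x[of 0 y] \<epsilon>_pos a_nonzero by (simp add: field_simps)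

lemma second_derivatives_agree_on_y_axis:
  assumes y: "\<bar>y\<bar> < \<epsilon>"
  shows "A'' y = B'' y"
proof -
  have "((\<lambda>z. A' z - B' z + p' 0 / a) has_real_derivative A'' y - B'' y + 0) (at y)"
    using \<rho>_bound_on_y_axis[OF y] by (intro derivative_intros A'_deriv B'_deriv)
  then have "A'' y - B'' y + 0 = 0"
    by (rule has_real_derivative_vanishing_near[where e = \<epsilon>])
      (use y first_derivative_difference_on_y_axis in auto)
  then show ?thesis
    by simp
qed

lemma third_derivatives_agree_on_y_axis:
  assumes y: "\<bar>y\<bar> < \<epsilon>"
  shows "A''' y = B''' y"
proof -
  have "((\<lambda>z. A'' z - B'' z) has_real_derivative A''' y - B''' y) (at y)"
    using \<rho>_bound_on_y_axis[OF y] by (intro derivative_intros A''_deriv B''_deriv)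
  then have "A''' y - B''' y = 0"
    by (rule has_real_derivative_vanishing_near[where e = \<epsilon>])
      (use y second_derivatives_agree_on_y_axis in auto)
  then show ?thesis
    by simp
qed

lemma second_derivative_sum_on_y_axis:
  assumes y: "\<bar>y\<bar> < \<epsilon>"
  shows "a\<^sup>2 * (A'' y + B'' y) + p'' 0 - y * p' 0 / a\<^sup>2 = 0"
proof -
  have "p'' 0 + (A'' y * a * a + A' y * (2 * y * u' 0)) + (B'' y * (- a) * (- a) + B' y * (- 2 * y * u' 0)) = 0"
    using relation_deriv_xx[of 0 y] y \<epsilon>_pos by simp
  then have "a\<^sup>2 * (A'' y + B'' y) + p'' 0 + 2 * y * u' 0 * (A' y - B' y) = 0"
    by (simp add: algebra_simps power2_eq_square)
  then show ?thesis
    using a_nonzero unfolding first_derivative_difference_on_y_axis[OF y] u'_0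
    by (simp add: field_simps power2_eq_square)
qed

lemma first_derivative_sum_on_y_axis:
  assumes y: "\<bar>y\<bar> < \<epsilon>"
  shows "2 * a ^ 4 * (A' y + B' y) = - 2 * a ^ 4 * p''' 0 + 6 * a\<^sup>2 * p'' 0 * y - 9 * p' 0 * y\<^sup>2"
proof -
  define k c w where "k = - p' 0 / a" and "c = u' 0" and "w = u'' 0"
  have ka: "k * a = - p' 0" and ca: "c * (2 * a) = 1" and wa: "w * (2 * a ^ 3) = - 1"
    using a_nonzero by (simp_all add: k_def c_def w_def u'_0 u''_0)
  have diff: "A' y - B' y = k" and "A''' y = B''' y"
    using first_derivative_difference_on_y_axis[OF y] third_derivatives_agree_on_y_axis[OF y]
    by (simp_all add: k_def)
  have "a\<^sup>2 * (A'' y + B'' y) + p'' 0 + 2 * y * c * k = 0"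
    using second_derivative_sum_on_y_axis[OF y] a_nonzero
    by (simp add: k_def c_def u'_0 field_simps power2_eq_square)
  then show ?thesis
    using relation_deriv_xxx_on_y_axis[OF y, folded c_def w_def] diff \<open>A''' y = B''' y\<close> ka ca wa
    by algebra
qed

lemma relation_linear_terms_vanish: "p' 0 = 0 \<and> p'' 0 = 0"
proof -
  define P where "P z = (- 2 * a ^ 4 * p''' 0 + 6 * a\<^sup>2 * p'' 0 * z - 9 * p' 0 * z\<^sup>2) / (2 * a ^ 4)" for z
  have sum_eq_P: "A' z + B' z = P z" if "\<bar>z\<bar> < \<epsilon>" for z
    using first_derivative_sum_on_y_axis[OF that] a_nonzero by (simp add: P_def eq_divide_eq mult.commute)
  have "4 * a\<^sup>2 * p'' 0 = 10 * y * p' 0" if y: "\<bar>y\<bar> < \<epsilon>" for y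
  proof -
    have "((\<lambda>z. A' z + B' z) has_real_derivative A'' y + B'' y) (at y)"
      using \<rho>_bound_on_y_axis[OF y] by (intro derivative_intros A'_deriv B'_deriv)
    moreover have "(P has_real_derivative (6 * a\<^sup>2 * p'' 0 - 18 * p' 0 * y) / (2 * a ^ 4)) (at y)"
      unfolding P_def[abs_def] using a_nonzero
      by (auto intro!: derivative_eq_intros simp: power2_eq_square field_simps)
    then have "((\<lambda>z. A' z + B' z) has_real_derivative (6 * a\<^sup>2 * p'' 0 - 18 * p' 0 * y) / (2 * a ^ 4)) (at y)"
      by (rule has_field_derivative_transform_within_open[where S = "{-\<epsilon><..<\<epsilon>}"])
        (use y sum_eq_P in auto)
    ultimately have "A'' y + B'' y = (6 * a\<^sup>2 * p'' 0 - 18 * p' 0 * y) / (2 * a ^ 4)"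
      by (rule DERIV_unique)
    then have "a ^ 4 * (A'' y + B'' y) = 3 * a\<^sup>2 * p'' 0 - 9 * p' 0 * y"
      using a_nonzero by (simp add: field_simps)
    moreover have "a ^ 4 * (A'' y + B'' y) + a\<^sup>2 * p'' 0 = y * p' 0"
      using second_derivative_sum_on_y_axis[OF y] a_nonzero
      by (simp add: field_simps power2_eq_square power4_eq_xxxx)
    ultimately show ?thesis
      by (simp add: algebra_simps)
  qed
  from this[of 0] this[of "\<epsilon> / 2"] \<epsilon>_pos a_nonzero show ?thesis
    by simp
qed

lemma first_derivatives_on_y_axis:
  assumes y: "\<bar>y\<bar> < \<epsilon>"
  shows "A' y = - p''' 0 / 2 \<and> B' y = - p''' 0 / 2"
proof -
  have p': "p' 0 = 0" and p'': "p'' 0 = 0"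
    using relation_linear_terms_vanish by simp_all
  have "A' y - B' y = 0"
    using first_derivative_difference_on_y_axis[OF y] unfolding p' by simp
  have "2 * a ^ 4 \<noteq> 0"
    using a_nonzero by simp
  moreover have "2 * a ^ 4 * (A' y + B' y) = 2 * a ^ 4 * - p''' 0"
    using first_derivative_sum_on_y_axis[OF y] unfolding p' p'' by algebra
  ultimately have "A' y + B' y = - p''' 0"
    by (rule mult_left_cancel[THEN iffD1])
  with \<open>A' y - B' y = 0\<close> show ?thesis
    by (intro conjI; linarith)
qed

end

context web_relation
begin

lemma components_linear:
  "\<exists>K. \<forall>\<^sub>F s in nhds 0. p s = K * (s ^ 3 / 3) \<and> q s = K * (2 * s) \<and> A s = K * - s \<and> B s = K * - s"
proof -
  define K where "K = p''' 0 / 2"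
  have "(A has_real_derivative - K) (at y)" "(B has_real_derivative - K) (at y)" if "\<bar>y\<bar> < \<epsilon>" for y
    using A_deriv[OF \<rho>_bound_on_y_axis[OF that]] B_deriv[OF \<rho>_bound_on_y_axis[OF that]]
      first_derivatives_on_y_axis[OF that] by (simp_all add: K_def)
  then have A: "A y = K * - y" and B: "B y = K * - y" if "\<bar>y\<bar> < \<epsilon>" for y
    using DERIV_const_imp_linear[of \<epsilon> A "- K" y] DERIV_const_imp_linear[of \<epsilon> B "- K" y]
      that vanish_at_0 by auto
  have q: "q y = K * (2 * y)" if y: "\<bar>y\<bar> < \<epsilon>" for y
    using relation[of 0 y] \<epsilon>_pos y A[OF y] B[OF y] vanish_at_0 by simp
  have p: "p x = K * (x ^ 3 / 3)"
    if "\<bar>x ^ 3 / 6 + x * a\<bar> < \<epsilon>" "\<bar>x ^ 3 / 6 - x * a\<bar> < \<epsilon>" "\<bar>x\<bar> < \<epsilon>" for x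
  proof -
    have "p x + q 0 + A (x ^ 3 / 6 + x * a) + B (x ^ 3 / 6 - x * a) = 0"
      using relation[of x 0] that(3) \<epsilon>_pos by (simp add: web_f_def web_g_def u_0)
    then show ?thesis
      using A[OF that(1)] B[OF that(2)] vanish_at_0 by (simp add: algebra_simps)
  qed
  have "((\<lambda>x. \<bar>x ^ 3 / 6 + x * a\<bar>) \<longlongrightarrow> 0) (nhds 0)"
    and "((\<lambda>x. \<bar>x ^ 3 / 6 - x * a\<bar>) \<longlongrightarrow> 0) (nhds 0)"
    and "((\<lambda>x. \<bar>x\<bar>) \<longlongrightarrow> 0) (nhds (0::real))"
    by (auto intro!: tendsto_eq_intros filterlim_ident)
  from this[THEN order_tendstoD(2), OF \<epsilon>_pos]
  have "\<forall>\<^sub>F x in nhds 0. \<bar>x ^ 3 / 6 + x * a\<bar> < \<epsilon> \<and> \<bar>x ^ 3 / 6 - x * a\<bar> < \<epsilon> \<and> \<bar>x\<bar> < \<epsilon>"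
    by (simp add: eventually_conj_iff)
  then have "\<forall>\<^sub>F s in nhds 0.
      p s = K * (s ^ 3 / 3) \<and> q s = K * (2 * s) \<and> A s = K * - s \<and> B s = K * - s"
    by eventually_elim (elim conjE, intro conjI p A B q)
  then show ?thesis
    by (rule exI[of _ K])
qed

end

context ode_solution_germ
begin

lemma web_functions_tendsto_0:
  "(web_f u \<longlongrightarrow> 0) (nhds (0, 0))" "(web_g u \<longlongrightarrow> 0) (nhds (0, 0))"
proof -
  have "((\<lambda>p::real \<times> real. fst p * snd p) \<longlongrightarrow> 0) (nhds (0, 0))"
    using tendsto_mult[OF tendsto_fst[OF filterlim_ident] tendsto_snd[OF filterlim_ident],
        of "(0::real, 0::real)"] by simp
  then have u_lim: "((\<lambda>p. u (fst p * snd p)) \<longlongrightarrow> u 0) (nhds (0, 0))"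
    using isCont_tendsto_compose[OF DERIV_isCont[OF u_deriv[of 0]]] r_pos by simp
  have fst_lim: "((\<lambda>p::real \<times> real. fst p) \<longlongrightarrow> 0) (nhds (0, 0))"
    and snd_lim: "((\<lambda>p::real \<times> real. snd p) \<longlongrightarrow> 0) (nhds (0, 0))"
    using tendsto_fst[OF filterlim_ident, of "(0::real, 0::real)"]
      tendsto_snd[OF filterlim_ident, of "(0::real, 0::real)"] by simp_all
  have "((\<lambda>p. fst p ^ 3 / 6 + snd p + fst p * u (fst p * snd p)) \<longlongrightarrow> 0 ^ 3 / 6 + 0 + 0 * u 0) (nhds (0, 0))"
    and "((\<lambda>p. fst p ^ 3 / 6 + snd p - fst p * u (fst p * snd p)) \<longlongrightarrow> 0 ^ 3 / 6 + 0 - 0 * u 0) (nhds (0, 0))"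
    by (intro tendsto_intros u_lim fst_lim snd_lim | simp)+
  then show "(web_f u \<longlongrightarrow> 0) (nhds (0, 0))" "(web_g u \<longlongrightarrow> 0) (nhds (0, 0))"
    by (simp_all add: web_f_def[abs_def] web_g_def[abs_def])
qed

lemma abelian_relation_cubic:
  "abelian_relation [fst, snd, web_f u, web_g u] [\<lambda>s. s ^ 3 / 3, \<lambda>s. 2 * s, \<lambda>s. - s, \<lambda>s. - s] (0, 0)"
proof -
  have "real_analytic_at (\<lambda>s. s ^ 3 / 3) 0" "real_analytic_at (\<lambda>s. 2 * s) 0"
    "real_analytic_at (\<lambda>s. - s) 0"
    using real_analytic_at_monomial[of "1/3" 3] real_analytic_at_monomial[of 2 1]
      real_analytic_at_monomial[of "-1" 1] by simp_all
  then show ?thesis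
    unfolding abelian_relation_def
    by (auto simp: less_Suc_eq numeral_eq_Suc web_f_def web_g_def)
qed

lemma abelian_relation_cubic_nontrivial:
  "\<not> trivial_relation [fst, snd, web_f u, web_g u] [\<lambda>s. s ^ 3 / 3, \<lambda>s. 2 * s, \<lambda>s. - s, \<lambda>s. - s] (0, 0)"
proof
  assume "trivial_relation [fst, snd, web_f u, web_g u] [\<lambda>s. s ^ 3 / 3, \<lambda>s. 2 * s, \<lambda>s. - s, \<lambda>s. - s] (0, 0)"
  then have "\<forall>\<^sub>F s in nhds (0::real). 2 * s = 0"
    unfolding trivial_relation_def by (drule_tac x = 1 in spec) simp
  then obtain d where "d > 0" "\<And>s. dist s 0 < d \<Longrightarrow> 2 * s = (0::real)"
    unfolding eventually_nhds_metric by blast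
  from this(2)[of "d / 2"] \<open>d > 0\<close> show False
    by simp
qed

lemma abelian_relation_multiple_of_cubic:
  assumes relation: "abelian_relation [fst, snd, web_f u, web_g u] \<phi>s (0, 0)"
  shows "\<exists>K. \<forall>\<^sub>F s in nhds 0. (\<phi>s ! 0) s = K * (s ^ 3 / 3) \<and> (\<phi>s ! 1) s = K * (2 * s)
    \<and> (\<phi>s ! 2) s = K * - s \<and> (\<phi>s ! 3) s = K * - s"
proof -
  have "([fst, snd, web_f u, web_g u] ! i) (0, 0) = 0" if "i < 4" for i
    using that by (auto simp: less_Suc_eq numeral_eq_Suc)
  then have components: "real_analytic_at (\<phi>s ! i) 0 \<and> (\<phi>s ! i) 0 = 0" if "i < 4" for i
    using relation that unfolding abelian_relation_def by fastforce
  have sum_vanishes: "\<forall>\<^sub>F q in nhds (0, 0).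
      (\<phi>s ! 0) (fst q) + (\<phi>s ! 1) (snd q) + (\<phi>s ! 2) (web_f u q) + (\<phi>s ! 3) (web_g u q) = 0"
    using relation unfolding abelian_relation_def by (simp add: eval_nat_numeral add.assoc)
  obtain \<rho>0 where "\<rho>0 > 0"
    and derivs0: "\<And>t. \<bar>t\<bar> < \<rho>0 \<Longrightarrow> (\<phi>s ! 0 has_real_derivative deriv (\<phi>s ! 0) t) (at t)"
      "\<And>t. \<bar>t\<bar> < \<rho>0 \<Longrightarrow> (deriv (\<phi>s ! 0) has_real_derivative deriv (deriv (\<phi>s ! 0)) t) (at t)"
      "\<And>t. \<bar>t\<bar> < \<rho>0 \<Longrightarrow> (deriv (deriv (\<phi>s ! 0)) has_real_derivative deriv (deriv (deriv (\<phi>s ! 0))) t) (at t)"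
    using real_analytic_at_three_derivs[OF conjunct1[OF components[of 0]]] by auto
  obtain \<rho>2 where "\<rho>2 > 0"
    and derivs2: "\<And>t. \<bar>t\<bar> < \<rho>2 \<Longrightarrow> (\<phi>s ! 2 has_real_derivative deriv (\<phi>s ! 2) t) (at t)"
      "\<And>t. \<bar>t\<bar> < \<rho>2 \<Longrightarrow> (deriv (\<phi>s ! 2) has_real_derivative deriv (deriv (\<phi>s ! 2)) t) (at t)"
      "\<And>t. \<bar>t\<bar> < \<rho>2 \<Longrightarrow> (deriv (deriv (\<phi>s ! 2)) has_real_derivative deriv (deriv (deriv (\<phi>s ! 2))) t) (at t)"
    using real_analytic_at_three_derivs[OF conjunct1[OF components[of 2]]] by auto
  obtain \<rho>3 where "\<rho>3 > 0"
    and derivs3: "\<And>t. \<bar>t\<bar> < \<rho>3 \<Longrightarrow> (\<phi>s ! 3 has_real_derivative deriv (\<phi>s ! 3) t) (at t)"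
      "\<And>t. \<bar>t\<bar> < \<rho>3 \<Longrightarrow> (deriv (\<phi>s ! 3) has_real_derivative deriv (deriv (\<phi>s ! 3)) t) (at t)"
      "\<And>t. \<bar>t\<bar> < \<rho>3 \<Longrightarrow> (deriv (deriv (\<phi>s ! 3)) has_real_derivative deriv (deriv (deriv (\<phi>s ! 3))) t) (at t)"
    using real_analytic_at_three_derivs[OF conjunct1[OF components[of 3]]] by auto
  define \<rho> where "\<rho> = min \<rho>0 (min \<rho>2 \<rho>3)"
  have "\<rho> > 0"
    using \<open>\<rho>0 > 0\<close> \<open>\<rho>2 > 0\<close> \<open>\<rho>3 > 0\<close> by (simp add: \<rho>_def)
  have "\<forall>\<^sub>F q in nhds (0, 0). \<bar>web_f u q\<bar> < \<rho>" "\<forall>\<^sub>F q in nhds (0, 0). \<bar>web_g u q\<bar> < \<rho>"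
    "\<forall>\<^sub>F q in nhds (0::real, 0::real). \<bar>fst q\<bar> < \<rho>"
    using tendstoD[OF web_functions_tendsto_0(1) \<open>\<rho> > 0\<close>] tendstoD[OF web_functions_tendsto_0(2) \<open>\<rho> > 0\<close>]
      tendstoD[OF tendsto_fst[OF filterlim_ident, of "(0::real, 0::real)"] \<open>\<rho> > 0\<close>]
    by (simp_all add: dist_real_def)
  with sum_vanishes eventually_product_small obtain e where "e > 0"
    and box: "\<And>x y. \<bar>x\<bar> < e \<Longrightarrow> \<bar>y\<bar> < e \<Longrightarrow>
      (\<phi>s ! 0) x + (\<phi>s ! 1) y + (\<phi>s ! 2) (web_f u (x, y)) + (\<phi>s ! 3) (web_g u (x, y)) = 0
      \<and> \<bar>web_f u (x, y)\<bar> < \<rho> \<and> \<bar>web_g u (x, y)\<bar> < \<rho> \<and> \<bar>x\<bar> < \<rho> \<and> \<bar>x * y\<bar> < r"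
    by (rule eventually_nhds_zero_box[OF eventually_conj[OF _ eventually_conj[OF _
          eventually_conj[OF _ eventually_conj]]]]) auto
  interpret web_relation u u' u'' u''' a r
    "\<phi>s ! 0" "deriv (\<phi>s ! 0)" "deriv (deriv (\<phi>s ! 0))" "deriv (deriv (deriv (\<phi>s ! 0)))" "\<phi>s ! 1"
    "\<phi>s ! 2" "deriv (\<phi>s ! 2)" "deriv (deriv (\<phi>s ! 2))" "deriv (deriv (deriv (\<phi>s ! 2)))"
    "\<phi>s ! 3" "deriv (\<phi>s ! 3)" "deriv (deriv (\<phi>s ! 3))" "deriv (deriv (deriv (\<phi>s ! 3)))" \<rho> e
    by unfold_locales
      (use \<open>\<rho> > 0\<close> \<open>e > 0\<close> components box derivs0 derivs2 derivs3 in \<open>auto simp: \<rho>_def\<close>)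
  show ?thesis
    by (rule components_linear)
qed

lemma web_rank_one: "web_rank_one [fst, snd, web_f u, web_g u] (0, 0)"
  unfolding web_rank_one_def
proof (intro exI[of _ "[\<lambda>s. s ^ 3 / 3, \<lambda>s. 2 * s, \<lambda>s. - s, \<lambda>s. - s]"] conjI allI impI
    abelian_relation_cubic abelian_relation_cubic_nontrivial)
  fix \<phi>s
  assume "abelian_relation [fst, snd, web_f u, web_g u] \<phi>s (0, 0)"
  then obtain K where K: "\<forall>\<^sub>F s in nhds 0. (\<phi>s ! 0) s = K * (s ^ 3 / 3) \<and> (\<phi>s ! 1) s = K * (2 * s)
      \<and> (\<phi>s ! 2) s = K * - s \<and> (\<phi>s ! 3) s = K * - s"
    using abelian_relation_multiple_of_cubic by blast
  show "\<exists>c. \<forall>i<length [fst, snd, web_f u, web_g u].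
      \<forall>\<^sub>F s in nhds (([fst, snd, web_f u, web_g u] ! i) (0, 0)).
        (\<phi>s ! i) s = c * ([\<lambda>s. s ^ 3 / 3, \<lambda>s. 2 * s, \<lambda>s. - s, \<lambda>s. - s] ! i) s"
  proof (intro exI[of _ K] allI impI)
    fix i
    assume "i < length [fst, snd, web_f u, web_g u]"
    then consider "i = 0" | "i = 1" | "i = 2" | "i = 3"
      by fastforce
    then show "\<forall>\<^sub>F s in nhds (([fst, snd, web_f u, web_g u] ! i) (0, 0)).
        (\<phi>s ! i) s = K * ([\<lambda>s. s ^ 3 / 3, \<lambda>s. 2 * s, \<lambda>s. - s, \<lambda>s. - s] ! i) s"
      by cases (use K in \<open>auto simp: elim: eventually_mono\<close>)
  qed
qed

end

theorem mainTheorem5: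
  fixes a :: real
  assumes "a \<noteq> 0"
  shows "(\<exists>u. real_analytic_at u 0 \<and> u 0 = a \<and>
            (\<forall>\<^sub>F t in nhds 0. t * (deriv u t)\<^sup>2 + u t * deriv u t - 1 / 2 = 0))
       \<and> (\<forall>u. real_analytic_at u 0 \<and> u 0 = a \<and>
            (\<forall>\<^sub>F t in nhds 0. t * (deriv u t)\<^sup>2 + u t * deriv u t - 1 / 2 = 0) \<longrightarrow>
          (\<forall>\<^sub>F p in nhds (0, 0).
              Dx (web_f u) p * Dy (web_g u) p + Dx (web_g u) p * Dy (web_f u) p = 0)
        \<and> blaschke_curvature fst snd (web_f u) (0, 0) \<noteq> 0
        \<and> \<not> hexagonal_at fst snd (web_f u) (0, 0)
        \<and> \<not> hexagonal_at fst snd (web_g u) (0, 0)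
        \<and> \<not> hexagonal_at fst (web_f u) (web_g u) (0, 0)
        \<and> \<not> hexagonal_at snd (web_f u) (web_g u) (0, 0)
        \<and> abelian_relation [fst, snd, web_f u, web_g u]
             [\<lambda>s. s ^ 3 / 3, \<lambda>s. 2 * s, \<lambda>s. - s, \<lambda>s. - s] (0, 0)
        \<and> \<not> trivial_relation [fst, snd, web_f u, web_g u]
             [\<lambda>s. s ^ 3 / 3, \<lambda>s. 2 * s, \<lambda>s. - s, \<lambda>s. - s] (0, 0)
        \<and> web_rank_one [fst, snd, web_f u, web_g u] (0, 0))"
proof (intro conjI allI impI)
  show "\<exists>u. real_analytic_at u 0 \<and> u 0 = a \<and>
      (\<forall>\<^sub>F t in nhds 0. t * (deriv u t)\<^sup>2 + u t * deriv u t - 1 / 2 = 0)"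
    using ode_solution_exists[OF assms] .
next
  fix u
  assume "real_analytic_at u 0 \<and> u 0 = a \<and>
    (\<forall>\<^sub>F t in nhds 0. t * (deriv u t)\<^sup>2 + u t * deriv u t - 1 / 2 = 0)"
  then obtain r where "ode_solution_germ u (deriv u) (deriv (deriv u)) (deriv (deriv (deriv u))) a r"
    using ode_solution_germ_of_solution[OF assms] by blast
  then interpret ode_solution_germ u "deriv u" "deriv (deriv u)" "deriv (deriv (deriv u))" a r .
  have "1 / a\<^sup>2 \<noteq> 0"
    using assms by simp
  then show "blaschke_curvature fst snd (web_f u) (0, 0) \<noteq> 0"
    and "\<not> hexagonal_at fst snd (web_f u) (0, 0)"
    and "\<not> hexagonal_at fst snd (web_g u) (0, 0)"
    and "\<not> hexagonal_at fst (web_f u) (web_g u) (0, 0)"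
    and "\<not> hexagonal_at snd (web_f u) (web_g u) (0, 0)"
    by (simp_all add: not_hexagonal_at blaschke_curvature_fst_snd_web_f blaschke_curvature_fst_snd_web_g
        blaschke_curvature_fst_web_f_web_g blaschke_curvature_snd_web_f_web_g)
  show "\<forall>\<^sub>F p in nhds (0, 0). Dx (web_f u) p * Dy (web_g u) p + Dx (web_g u) p * Dy (web_f u) p = 0"
    by (rule cross_ratio_harmonic)
  show "abelian_relation [fst, snd, web_f u, web_g u]
      [\<lambda>s. s ^ 3 / 3, \<lambda>s. 2 * s, \<lambda>s. - s, \<lambda>s. - s] (0, 0)"
    by (rule abelian_relation_cubic)
  show "\<not> trivial_relation [fst, snd, web_f u, web_g u]
      [\<lambda>s. s ^ 3 / 3, \<lambda>s. 2 * s, \<lambda>s. - s, \<lambda>s. - s] (0, 0)"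
    by (rule abelian_relation_cubic_nontrivial)
  show "web_rank_one [fst, snd, web_f u, web_g u] (0, 0)"
    by (rule web_rank_one)
qed

end
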